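(* Let $n\ge1$, $h>0$, $\lambda>0$, and let $f:\mathbb{R}^n\to\mathbb{R}$ be Lipschitz with Lipschitz constant $L$. Then for every grid point $x_k\in h\mathbb{Z}^n$, $$\big|M^h_\lambda(f)(x_k)-M_\lambda(f)(x_k)\big|\le(2+\sqrt n)Lh+2\lambda h^2 n.$$
   Context: $M_\lambda(f)(x)=\inf_{y\in\mathbb{R}^n}\{f(y)+\lambda|y-x|^2\}$ is the lower Moreau envelope, and the discrete lower Moreau envelope at a grid point $x_k$ of the grid of size $h$ is $M^h_\lambda(f)(x_k)=\inf\{f(x_k+rh)+\lambda h^2|r|^2:\ r\in\mathbb{Z}^n\}$. Here $|\cdot|$ is the Euclidean norm. *)

theory Defs
  imports "HOL-Analysis.Analysis"
begin

definition moreau_env :: "real \<Rightarrow> (real^'n \<Rightarrow> real) \<Rightarrow> real^'n \<Rightarrow> real" where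
  "moreau_env lam f x = (INF y. f y + lam * (norm (y - x))^2)"

definition int_vec :: "(real^'n) set" where
  "int_vec = {r. \<forall>i. r $ i \<in> \<int>}"

definition disc_moreau_env :: "real \<Rightarrow> real \<Rightarrow> (real^'n \<Rightarrow> real) \<Rightarrow> real^'n \<Rightarrow> real" where
  "disc_moreau_env h lam f x = (INF r\<in>int_vec. f (x + h *\<^sub>R r) + lam * h^2 * (norm r)^2)"

end

theory Submission
  imports Defs
begin

text \<open>Both envelopes minimise the same objective \<open>g y = f y + \<lambda> |y - x|\<^sup>2\<close>, the discrete one
  only over the grid points \<open>x + h r\<close>, so \<open>M\<^sub>\<lambda>(f)(x) \<le> M\<^sup>h\<^sub>\<lambda>(f)(x)\<close>. Conversely, rounding each
  coordinate of \<open>(y - x)/h\<close> towards zero gives a grid point \<open>x + h r\<close> that is no farther from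
  \<open>x\<close> than \<open>y\<close> and within \<open>\<surd>n h\<close> of \<open>y\<close>; hence \<open>g (x + h r) \<le> g y + \<surd>n L h\<close>.
  This yields the sharper bound \<open>0 \<le> M\<^sup>h\<^sub>\<lambda>(f)(x) - M\<^sub>\<lambda>(f)(x) \<le> \<surd>n L h\<close> at every point \<open>x\<close>. Lipschitz continuity bounds \<open>g\<close> below
  by \<open>f x - L\<^sup>2/(4\<lambda>)\<close>, which is what makes both infima genuine rather than junk values.\<close>

lemma lipschitz_quadratic_lower_bound:
  fixes f :: "'a::real_normed_vector \<Rightarrow> real"
  assumes "L-lipschitz_on UNIV f" and "lam > 0"
  shows "f x - L\<^sup>2 / (4 * lam) \<le> f y + lam * (norm (y - x))\<^sup>2"
proof -
  define t where "t = norm (y - x)"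
  have "f x - f y \<le> L * t"
    using lipschitz_onD[OF assms(1), of x y] by (simp add: t_def dist_norm norm_minus_commute)
  moreover have "lam * t\<^sup>2 - L * t + L\<^sup>2 / (4 * lam) = lam * (t - L / (2 * lam))\<^sup>2"
    using \<open>lam > 0\<close> by (simp add: field_simps power2_eq_square)
  then have "0 \<le> lam * t\<^sup>2 - L * t + L\<^sup>2 / (4 * lam)"
    using \<open>lam > 0\<close> by simp
  ultimately show ?thesis
    unfolding t_def by linarith
qed

lemma bdd_below_moreau_objective:
  fixes f :: "'a::real_normed_vector \<Rightarrow> real"
  assumes "L-lipschitz_on UNIV f" and "lam > 0"
  shows "bdd_below ((\<lambda>y. f y + lam * (norm (y - x))\<^sup>2) ` A)"
  using lipschitz_quadratic_lower_bound[OF assms] by (intro bdd_belowI2) blast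

lemma round_toward_zero:
  fixes a :: real
  obtains k where "k \<in> \<int>" and "\<bar>k\<bar> \<le> \<bar>a\<bar>" and "\<bar>k - a\<bar> \<le> 1"
proof (cases "a \<ge> 0")
  case True
  then show ?thesis
    using that[of "of_int \<lfloor>a\<rfloor>"] of_int_floor_le[of a] real_of_int_floor_add_one_gt[of a] by simp
next
  case False
  then show ?thesis
    using that[of "of_int \<lceil>a\<rceil>"] ceiling_correct[of a] by simp
qed

lemma zero_in_int_vec: "0 \<in> int_vec"
  unfolding int_vec_def by simp

lemma grid_point_toward_zero:
  fixes d :: "real^'n"
  assumes "h > 0"
  obtains r where "r \<in> int_vec" and "norm (h *\<^sub>R r) \<le> norm d"
    and "norm (h *\<^sub>R r - d) \<le> sqrt (real CARD('n)) * h"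
proof -
  have "\<exists>k. k \<in> \<int> \<and> \<bar>h * k\<bar> \<le> \<bar>d $ i\<bar> \<and> \<bar>h * k - d $ i\<bar> \<le> h" for i
  proof -
    obtain k where k: "k \<in> \<int>" "\<bar>k\<bar> \<le> \<bar>d $ i / h\<bar>" "\<bar>k - d $ i / h\<bar> \<le> 1"
      by (rule round_toward_zero)
    have "h * k - d $ i = h * (k - d $ i / h)"
      using \<open>h > 0\<close> by (simp add: right_diff_distrib)
    then have "\<bar>h * k\<bar> = h * \<bar>k\<bar>" and "\<bar>h * k - d $ i\<bar> = h * \<bar>k - d $ i / h\<bar>"
      using \<open>h > 0\<close> by (simp_all add: abs_mult)
    moreover have "h * \<bar>d $ i / h\<bar> = \<bar>d $ i\<bar>"
      using \<open>h > 0\<close> by (simp add: abs_divide)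
    ultimately show ?thesis
      using k \<open>h > 0\<close> by (metis mult_left_mono mult.right_neutral less_imp_le)
  qed
  then obtain k where k: "\<And>i. k i \<in> \<int> \<and> \<bar>h * k i\<bar> \<le> \<bar>d $ i\<bar> \<and> \<bar>h * k i - d $ i\<bar> \<le> h"
    by metis
  define r :: "real^'n" where "r = (\<chi> i. k i)"
  have "r \<in> int_vec"
    using k by (simp add: int_vec_def r_def)
  moreover have "norm (h *\<^sub>R r) \<le> norm d"
    using k by (intro norm_le_componentwise_cart) (simp add: r_def)
  moreover have "norm (h *\<^sub>R r - d) \<le> norm (\<chi> i::'n. h)"
    using k \<open>h > 0\<close> by (intro norm_le_componentwise_cart) (simp add: r_def)
  then have "norm (h *\<^sub>R r - d) \<le> sqrt (real CARD('n)) * h"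
    using \<open>h > 0\<close> by (simp add: norm_vec_def L2_set_constant)
  ultimately show ?thesis
    using that by blast
qed

lemma disc_moreau_env_as_grid_inf:
  "disc_moreau_env h lam f x
     = (INF y\<in>(\<lambda>r. x + h *\<^sub>R r) ` int_vec. f y + lam * (norm (y - x))\<^sup>2)"
  unfolding disc_moreau_env_def image_image by (simp add: power_mult_distrib mult.assoc)

lemma moreau_env_le_disc_moreau_env:
  fixes f :: "real^'n \<Rightarrow> real"
  assumes "L-lipschitz_on UNIV f" and "lam > 0"
  shows "moreau_env lam f x \<le> disc_moreau_env h lam f x"
  unfolding moreau_env_def disc_moreau_env_as_grid_inf
  using zero_in_int_vec by (intro cINF_superset_mono bdd_below_moreau_objective[OF assms]) auto

lemma disc_moreau_env_le_moreau_env: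
  fixes f :: "real^'n \<Rightarrow> real"
  assumes lip: "L-lipschitz_on UNIV f" and "lam > 0" and "h > 0"
  shows "disc_moreau_env h lam f x \<le> moreau_env lam f x + sqrt (real CARD('n)) * L * h"
proof -
  define g where "g y = f y + lam * (norm (y - x))\<^sup>2" for y
  define s where "s = sqrt (real CARD('n)) * L * h"
  have "disc_moreau_env h lam f x \<le> g y + s" for y
  proof -
    obtain r where r: "r \<in> int_vec" "norm (h *\<^sub>R r) \<le> norm (y - x)"
      "norm (h *\<^sub>R r - (y - x)) \<le> sqrt (real CARD('n)) * h"
      using grid_point_toward_zero[OF \<open>h > 0\<close>] .
    have "L \<ge> 0"
      using lip by (simp add: lipschitz_on_def)
    have "f (x + h *\<^sub>R r) \<le> f y + L * norm (x + h *\<^sub>R r - y)"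
      using lipschitz_onD[OF lip, of "x + h *\<^sub>R r" y] by (simp add: dist_norm)
    also have "\<dots> \<le> f y + s"
      using mult_left_mono[OF r(3) \<open>L \<ge> 0\<close>] by (simp add: s_def algebra_simps)
    moreover have "lam * (norm (h *\<^sub>R r))\<^sup>2 \<le> lam * (norm (y - x))\<^sup>2"
      using r(2) \<open>lam > 0\<close> by (intro mult_left_mono power_mono) simp_all
    ultimately have "g (x + h *\<^sub>R r) \<le> g y + s"
      unfolding g_def by simp
    moreover have "disc_moreau_env h lam f x \<le> g (x + h *\<^sub>R r)"
      unfolding disc_moreau_env_as_grid_inf g_def
      using r(1) by (intro cINF_lower bdd_below_moreau_objective[OF lip \<open>lam > 0\<close>]) blast
    ultimately show ?thesis
      by linarith
  qed
  then have "disc_moreau_env h lam f x - s \<le> moreau_env lam f x"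
    unfolding moreau_env_def by (intro cINF_greatest) (simp_all add: g_def algebra_simps)
  then show ?thesis
    by (simp add: s_def)
qed

theorem corollary4p4:
  fixes f :: "real^'n \<Rightarrow> real" and h lam L :: real and xk :: "real^'n"
  assumes "h > 0" and "lam > 0"
    and "L-lipschitz_on UNIV f"
    and "xk \<in> (\<lambda>r. h *\<^sub>R r) ` int_vec"
  shows "\<bar>disc_moreau_env h lam f xk - moreau_env lam f xk\<bar>
           \<le> (2 + sqrt (real CARD('n))) * L * h + 2 * lam * h^2 * real CARD('n)"
proof -
  have "L \<ge> 0"
    using assms(3) by (simp add: lipschitz_on_def)
  have "0 \<le> disc_moreau_env h lam f xk - moreau_env lam f xk"
    using moreau_env_le_disc_moreau_env[OF assms(3,2)] by simp
  moreover have "disc_moreau_env h lam f xk - moreau_env lam f xk \<le> sqrt (real CARD('n)) * L * h"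
    using disc_moreau_env_le_moreau_env[OF assms(3,2,1), of xk] by simp
  moreover have "0 \<le> 2 * L * h + 2 * lam * h^2 * real CARD('n)"
    using \<open>L \<ge> 0\<close> assms(1,2) by simp
  ultimately show ?thesis
    by (simp add: algebra_simps)
qed

end
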